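(* Let $n$ be an odd integer with $2^{k-1}<n<2^k$, where $k=\lceil\log_2 n\rceil$, and suppose $n-1>2^{k-1}$. Let $s(x)=\min_{z\in\mathbb{Z}}|x-z|$ and, for integers $m$, define $f_i(m)=\frac{s(2^{i-k+1}\cdot m)}{2^{i-k+1}}$. Then for every $0\leq i\leq k-3$, $$f_i(n+1)+f_i(n-1)=2f_i(n).$$
   Context: $s(x)$ denotes the distance from the real number $x$ to the nearest integer. *)

theory Defs
  imports Complex_Main
begin

definition s :: "real \<Rightarrow> real" where
  "s x = (INF z::int. \<bar>x - real_of_int z\<bar>)"

definition f :: "nat \<Rightarrow> nat \<Rightarrow> int \<Rightarrow> real" where
  "f k i m = s (2 powr (real i - real k + 1) * real_of_int m) / 2 powr (real i - real k + 1)"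

end

theory Submission
  imports Defs
begin

text \<open>With \<open>N = 2^(k-1-i)\<close> we have \<open>f k i m = N * s (m / N)\<close>, and \<open>s\<close> is affine on every interval
  \<open>[q/2, (q+1)/2]\<close>. For \<open>i + 3 \<le> k\<close> the number \<open>N/2\<close> is even, so the odd \<open>n\<close> is not a multiple
  of it and \<open>(n-1)/N, n/N, (n+1)/N\<close> lie in one such interval; the second difference of an affine
  function vanishes.\<close>

lemma s_eq_abs:
  assumes "\<bar>x - real_of_int z\<bar> \<le> 1/2"
  shows "s x = \<bar>x - real_of_int z\<bar>"
proof -
  have nearest: "\<bar>x - real_of_int z\<bar> \<le> \<bar>x - real_of_int w\<bar>" for w
  proof (cases "w = z")
    case False
    then have "1 \<le> \<bar>w - z\<bar>" by linarith
    then have "1 \<le> \<bar>real_of_int w - real_of_int z\<bar>"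
      by (metis of_int_1_le_iff of_int_abs of_int_diff)
    then show ?thesis using assms by linarith
  qed simp
  have "(INF w::int. \<bar>x - real_of_int w\<bar>) = \<bar>x - real_of_int z\<bar>"
  proof (rule antisym)
    show "(INF w::int. \<bar>x - real_of_int w\<bar>) \<le> \<bar>x - real_of_int z\<bar>"
      by (rule cINF_lower) (auto intro: bdd_belowI2[where m=0])
    show "\<bar>x - real_of_int z\<bar> \<le> (INF w::int. \<bar>x - real_of_int w\<bar>)"
      by (rule cINF_greatest) (auto simp: nearest)
  qed
  then show ?thesis by (simp add: s_def)
qed

lemma s_on_half_interval:
  assumes "real_of_int q / 2 \<le> x" "x \<le> (real_of_int q + 1) / 2"
  shows "s x = (if even q then x - real_of_int q / 2 else (real_of_int q + 1) / 2 - x)"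
proof (cases "even q")
  case True
  then obtain p where "q = 2 * p" by blast
  with assms s_eq_abs[of x p] show ?thesis by simp
next
  case False
  then obtain p where "q = 2 * p + 1" by (blast elim: oddE)
  with assms s_eq_abs[of x "p + 1"] show ?thesis by simp
qed

lemma s_midpoint:
  assumes "0 \<le> h" "real_of_int q / 2 \<le> x - h" "x + h \<le> (real_of_int q + 1) / 2"
  shows "s (x + h) + s (x - h) = 2 * s x"
  using assms s_on_half_interval[of q "x + h"] s_on_half_interval[of q "x - h"]
    s_on_half_interval[of q x]
  by simp

lemma s_midpoint_of_not_dvd:
  fixes m M :: int
  assumes "0 < M" "\<not> M dvd m"
  shows "s (real_of_int (m + 1) / (2 * real_of_int M))
      + s (real_of_int (m - 1) / (2 * real_of_int M)) = 2 * s (real_of_int m / (2 * real_of_int M))"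
proof -
  define q where "q = m div M"
  have m: "m = q * M + m mod M" unfolding q_def by simp
  have "0 \<le> m mod M" "m mod M < M" "m mod M \<noteq> 0"
    using assms by (simp_all add: dvd_eq_mod_eq_0)
  then have "q * M \<le> m - 1" "m + 1 \<le> q * M + M"
    using m by linarith+
  then have "real_of_int (q * M) \<le> real_of_int (m - 1)"
    "real_of_int (m + 1) \<le> real_of_int (q * M + M)"
    by (simp_all only: of_int_le_iff)
  then have "real_of_int q / 2 \<le> real_of_int m / (2 * real_of_int M) - 1 / (2 * real_of_int M)"
    "real_of_int m / (2 * real_of_int M) + 1 / (2 * real_of_int M) \<le> (real_of_int q + 1) / 2"
    using assms(1) by (simp_all add: field_simps)
  from s_midpoint[OF _ this] assms(1) show ?thesis
    by (simp add: add_divide_distrib diff_divide_distrib)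
qed

lemma f_eq_scaled_s:
  assumes "i < k"
  shows "f k i m = 2 ^ (k - 1 - i) * s (real_of_int m / 2 ^ (k - 1 - i))"
proof -
  have "real i - real k + 1 = - real (k - 1 - i)" using assms by simp
  then have "2 powr (real i - real k + 1) = inverse (2 ^ (k - 1 - i))"
    by (simp only: powr_minus powr_realpow zero_less_numeral)
  then show ?thesis unfolding f_def by (simp add: divide_inverse mult.commute)
qed

theorem lemma5:
  fixes n :: int and k i :: nat
  assumes "odd n"
    and "int k = \<lceil>log 2 (real_of_int n)\<rceil>"
    and "2 ^ (k - 1) < n" and "n < 2 ^ k"
    and "n - 1 > 2 ^ (k - 1)"
    and "i + 3 \<le> k"
  shows "f k i (n + 1) + f k i (n - 1) = 2 * f k i n"
proof -
  define M :: int where "M = 2 ^ (k - 2 - i)"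
  have "i < k" using assms(6) by simp
  have N: "(2::real) ^ (k - 1 - i) = 2 * real_of_int M"
    using assms(6) by (simp add: M_def Suc_diff_Suc numeral_2_eq_2 flip: power_Suc)
  have f_scaled: "f k i m = 2 * real_of_int M * s (real_of_int m / (2 * real_of_int M))" for m
    unfolding f_eq_scaled_s[of i k m, OF \<open>i < k\<close>] N ..
  have "even M" using assms(6) by (simp add: M_def)
  then have "\<not> M dvd n" using assms(1) dvd_trans by blast
  from s_midpoint_of_not_dvd[OF _ this] have midpoint:
    "s (real_of_int (n + 1) / (2 * real_of_int M)) + s (real_of_int (n - 1) / (2 * real_of_int M))
      = 2 * s (real_of_int n / (2 * real_of_int M))"
    by (simp add: M_def)
  show ?thesis
    unfolding f_scaled distrib_left[symmetric] midpoint by simp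
qed

end
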